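(* Under the unregularized objective (the regularized minimax objective induced by $\mathfrak R(h,a,\delta)=\mathcal R(h,a)$), the PuB-AMG subgame perfect equilibrium is not in general continuous: there exists a finite-horizon two-player zero-sum sequential game such that no subgame perfect equilibrium of its PuB-AMG, viewed as a map from public belief states to public decision rules, is continuous.
   Context: A finite-horizon two-player zero-sum sequential game consists of: players $i\in\{0,1\}$; a finite action set $\mathbb{A}$; a set of histories $\mathbb{H}$, at each of which exactly one player $\iota$ acts; each history $h$ determines each player's action-observation history (AOH) $h_i$ (perfect recall) and a public history $h_{\text{pub}}$ (sequence of common-knowledge public observations); an initial history distribution $\mu$; a reward $\mathcal{R}:\mathbb{H}\times\mathbb{A}\to\mathbb{R}$ (player 0 gets $\mathcal R$, player 1 gets $-\mathcal R$); a transition function $\mathcal{T}:\mathbb{H}\times\mathbb{A}\to\Delta(\mathbb{H})$; a horizon $T$. $\mathbb{H}(h_{\text{pub}})$, $\mathbb{H}_i(h_{\text{pub}})$ denote histories/AOHs consistent with $h_{\text{pub}}$; $h_\iota$ is the acting player's AOH at $h$. The PuB-AMG of the game: states (public belief states, PBSs) are $\tilde s\in\Delta(\mathbb{H}(h_{\text{pub}}))$ for public histories $h_{\text{pub}}$; at $\tilde s$ the acting player chooses a public decision rule $\tilde a:\mathbb{H}_\iota(h_{\text{pub}})\to\Delta(\mathbb{A})$; the next PBS arises by sampling $H\sim\tilde s$, $A\sim\tilde a(H_\iota)$, a next history from $\mathcal T(H,A)$, observing its public observation $o$, and taking the posterior over next histories given $\tilde s,\tilde a,o$. Under the unregularized objective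 the stage reward is $\tilde{\mathcal R}(\tilde s,\tilde a)=\mathbb{E}_{H\sim\tilde s}\mathbb{E}_{A\sim\tilde a(H_\iota)}\mathcal R(H,A)$; player 0 maximizes and player 1 minimizes the expected sum of stage rewards. A PuB-AMG policy maps PBSs to decision rules, and a subgame perfect equilibrium is a joint PuB-AMG policy whose restriction to the PuB-AMG started from any PBS is an equilibrium (saddle point) there. *)

theory Defs
  imports "HOL-Probability.Probability" "HOL-Analysis.Analysis"
begin

text \<open>An action-observation history (AOH) is a list of steps; each step
records the player's own action if that player acted (Some a) or None, together with
the observation received.  A public history is the list of public observations.\<close>

type_synonym aoh = "(nat option \<times> nat) list"

record game =
  hists   :: "nat set"
  acts    :: "nat set"
  actor   :: "nat \<Rightarrow> nat"
  aohist  :: "nat \<Rightarrow> nat \<Rightarrow> aoh"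
  pubhist :: "nat \<Rightarrow> nat list"
  time    :: "nat \<Rightarrow> nat"
  init    :: "nat pmf"
  rew     :: "nat \<Rightarrow> nat \<Rightarrow> real"       \<comment> \<open>reward R(h,a) for player 0\<close>
  trans   :: "nat \<Rightarrow> nat \<Rightarrow> nat pmf"
  horizon :: nat

definition wf_game :: "game \<Rightarrow> bool" where
  "wf_game G \<longleftrightarrow>
     finite (acts G) \<and> acts G \<noteq> {} \<and> finite (hists G) \<and>
     (\<forall>h\<in>hists G. actor G h \<in> {0, 1} \<and> time G h \<le> horizon G) \<and>
     set_pmf (init G) \<subseteq> hists G \<and> (\<forall>h\<in>set_pmf (init G). time G h = 0) \<and>
     (\<forall>h\<in>hists G. \<forall>a\<in>acts G. time G h < horizon G \<longrightarrow>
        (\<forall>h'\<in>set_pmf (trans G h a). h' \<in> hists G \<and> time G h' = Suc (time G h) \<and>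
           (\<exists>ob. pubhist G h' = pubhist G h @ [ob]) \<and>
           (\<forall>i\<in>{0::nat, 1}. \<exists>ob. aohist G i h' =
               aohist G i h @ [(if i = actor G h then Some a else None, ob)]))) \<and>
     \<comment> \<open>the public history is common knowledge: determined by each player's AOH\<close>
     (\<forall>i\<in>{0::nat, 1}. \<forall>h1\<in>hists G. \<forall>h2\<in>hists G.
        aohist G i h1 = aohist G i h2 \<longrightarrow> pubhist G h1 = pubhist G h2) \<and>
     \<comment> \<open>acting player and time are determined by the public history\<close>
     (\<forall>h1\<in>hists G. \<forall>h2\<in>hists G. pubhist G h1 = pubhist G h2 \<longrightarrow>
        actor G h1 = actor G h2 \<and> time G h1 = time G h2)"

definition pubs :: "game \<Rightarrow> nat list set" where
  "pubs G = pubhist G ` hists G"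

definition hists_at :: "game \<Rightarrow> nat list \<Rightarrow> nat set" where
  "hists_at G p = {h \<in> hists G. pubhist G h = p}"

definition pact :: "game \<Rightarrow> nat list \<Rightarrow> nat" where
  "pact G p = actor G (SOME h. h \<in> hists_at G p)"

definition ptime :: "game \<Rightarrow> nat list \<Rightarrow> nat" where
  "ptime G p = time G (SOME h. h \<in> hists_at G p)"

definition aohs_at :: "game \<Rightarrow> nat \<Rightarrow> nat list \<Rightarrow> aoh set" where
  "aohs_at G i p = aohist G i ` hists_at G p"

definition pbs :: "game \<Rightarrow> nat list \<Rightarrow> nat pmf set" where
  "pbs G p = {s. set_pmf s \<subseteq> hists_at G p}"

type_synonym drule = "aoh \<Rightarrow> nat pmf"
type_synonym policy = "nat pmf \<Rightarrow> drule"

definition valid_policy :: "game \<Rightarrow> policy \<Rightarrow> bool" where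
  "valid_policy G \<pi> \<longleftrightarrow> (\<forall>p\<in>pubs G. \<forall>s\<in>pbs G p. \<forall>x\<in>aohs_at G (pact G p) p.
      set_pmf (\<pi> s x) \<subseteq> acts G)"

definition stage_reward :: "game \<Rightarrow> nat pmf \<Rightarrow> drule \<Rightarrow> real" where
  "stage_reward G s d = measure_pmf.expectation s
     (\<lambda>h. measure_pmf.expectation (d (aohist G (actor G h) h)) (\<lambda>a. rew G h a))"

definition next_hist :: "game \<Rightarrow> nat pmf \<Rightarrow> drule \<Rightarrow> nat pmf" where
  "next_hist G s d = bind_pmf s (\<lambda>h. bind_pmf (d (aohist G (actor G h) h)) (\<lambda>a. trans G h a))"

definition next_pbs :: "game \<Rightarrow> nat pmf \<Rightarrow> drule \<Rightarrow> nat list \<Rightarrow> nat pmf" where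
  "next_pbs G s d q = cond_pmf (next_hist G s d) {h'. pubhist G h' = q}"

primrec val :: "game \<Rightarrow> policy \<Rightarrow> nat \<Rightarrow> nat pmf \<Rightarrow> real" where
  "val G \<pi> 0 s = 0"
| "val G \<pi> (Suc n) s = stage_reward G s (\<pi> s) +
     measure_pmf.expectation (map_pmf (pubhist G) (next_hist G s (\<pi> s)))
       (\<lambda>q. val G \<pi> n (next_pbs G s (\<pi> s) q))"

definition pbs_value :: "game \<Rightarrow> policy \<Rightarrow> nat list \<Rightarrow> nat pmf \<Rightarrow> real" where
  "pbs_value G \<pi> p s = val G \<pi> (horizon G - ptime G p) s"

definition deviation :: "game \<Rightarrow> nat \<Rightarrow> policy \<Rightarrow> policy \<Rightarrow> bool" where
  "deviation G i \<pi> \<pi>' \<longleftrightarrow> valid_policy G \<pi>' \<and>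
     (\<forall>q\<in>pubs G. \<forall>t\<in>pbs G q. pact G q \<noteq> i \<longrightarrow> \<pi>' t = \<pi> t)"

definition is_SPE :: "game \<Rightarrow> policy \<Rightarrow> bool" where
  "is_SPE G \<pi> \<longleftrightarrow> valid_policy G \<pi> \<and>
     (\<forall>p\<in>pubs G. \<forall>s\<in>pbs G p.
        (\<forall>\<pi>'. deviation G 0 \<pi> \<pi>' \<longrightarrow> pbs_value G \<pi>' p s \<le> pbs_value G \<pi> p s) \<and>
        (\<forall>\<pi>'. deviation G 1 \<pi> \<pi>' \<longrightarrow> pbs_value G \<pi> p s \<le> pbs_value G \<pi>' p s))"

text \<open>Continuity of a policy as a map from PBSs to public decision rules: for each public
history p, the map from the simplex Delta(H(p)) (coordinates pmf s h) to the decision rules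
on H_iota(p) (coordinates pmf (d x) a) is continuous.\<close>
definition pbs_vec :: "nat pmf \<Rightarrow> (nat \<Rightarrow> real)" where
  "pbs_vec s = (\<lambda>h. pmf s h)"

definition rule_vec :: "game \<Rightarrow> nat list \<Rightarrow> drule \<Rightarrow> (aoh \<times> nat \<Rightarrow> real)" where
  "rule_vec G p d = (\<lambda>(x, a). if x \<in> aohs_at G (pact G p) p then pmf (d x) a else 0)"

definition policy_continuous :: "game \<Rightarrow> policy \<Rightarrow> bool" where
  "policy_continuous G \<pi> \<longleftrightarrow> (\<forall>p\<in>pubs G. \<exists>f.
     continuous_on (pbs_vec ` pbs G p) f \<and>
     (\<forall>s\<in>pbs G p. f (pbs_vec s) = rule_vec G p (\<pi> s)))"

end

theory Submission
  imports Defs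
begin

text \<open>A hidden bit \<open>h \<in> {0, 1}\<close> is to be guessed by player 0 in a single move without any
information, earning 1 for a correct guess. At the PBS that gives \<open>h = 0\<close> probability \<open>t\<close>, the
guess 0 earns \<open>t\<close> and the guess 1 earns \<open>1 - t\<close>, so in every subgame perfect equilibrium the
probability of guessing 0 is 1 for \<open>t > 1/2\<close> and 0 for \<open>t < 1/2\<close>. This jump contradicts the
intermediate value theorem along the segment of beliefs.\<close>

lemma not_continuous_on_step:
  fixes g :: "real \<Rightarrow> real"
  assumes "a < c" "c < b"
    and below: "\<And>x. a \<le> x \<Longrightarrow> x < c \<Longrightarrow> g x = 0"
    and above: "\<And>x. c < x \<Longrightarrow> x \<le> b \<Longrightarrow> g x = 1"
  shows "\<not> continuous_on {a..b} g"
proof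
  assume cont: "continuous_on {a..b} g"
  have "g a = 0" "g b = 1" using assms by auto
  have at_step: "x = c" if "y \<in> {1/3, 2/3}" "a \<le> x" "x \<le> b" "g x = y" for x y
    using that below[of x] above[of x] by (cases x c rule: linorder_cases) auto
  obtain x where "a \<le> x" "x \<le> b" "g x = 1/3"
    using IVT'[OF _ _ _ cont, of "1/3"] \<open>g a = 0\<close> \<open>g b = 1\<close> assms(1,2) by auto
  then have "g c = 1/3" using at_step by auto
  obtain y where "a \<le> y" "y \<le> b" "g y = 2/3"
    using IVT'[OF _ _ _ cont, of "2/3"] \<open>g a = 0\<close> \<open>g b = 1\<close> assms(1,2) by auto
  then have "g c = 2/3" using at_step by auto
  with \<open>g c = 1/3\<close> show False by simp
qed

text \<open>Histories 0 and 1 carry the hidden bit; the guess \<open>a\<close> leads to the terminal history \<open>a + 2\<close>.\<close>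

definition guessing_game :: game where
  "guessing_game = \<lparr>hists = {0, 1, 2, 3}, acts = {0, 1}, actor = (\<lambda>_. 0),
     aohist = (\<lambda>i h. if h < 2 then [] else [(if i = 0 then Some (h - 2) else None, 0)]),
     pubhist = (\<lambda>h. if h < 2 then [] else [0]),
     time = (\<lambda>h. if h < 2 then 0 else 1),
     init = return_pmf 0,
     rew = (\<lambda>h a. if h = a then 1 else 0),
     trans = (\<lambda>h a. return_pmf (a + 2)),
     horizon = 1\<rparr>"

lemma wf_guessing_game: "wf_game guessing_game"
  unfolding wf_game_def guessing_game_def by auto

lemma hists_at_guessing_game_root: "hists_at guessing_game [] = {0, 1}"
  unfolding hists_at_def guessing_game_def by auto

lemma pact_guessing_game: "pact guessing_game q = 0"
  unfolding pact_def guessing_game_def by simp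

lemma ptime_guessing_game_root: "ptime guessing_game [] = 0"
proof -
  have "(SOME h. h \<in> hists_at guessing_game []) \<in> {0, 1}"
    unfolding hists_at_guessing_game_root by (rule someI[of _ 0]) simp
  then show ?thesis unfolding ptime_def by (auto simp: guessing_game_def)
qed

lemma aohs_at_guessing_game_root: "aohs_at guessing_game 0 [] = {[]}"
  unfolding aohs_at_def hists_at_guessing_game_root by (simp add: guessing_game_def)

lemma root_in_pubs_guessing_game: "[] \<in> pubs guessing_game"
  unfolding pubs_def by (force simp: guessing_game_def)

lemma pbs_guessing_game_root: "s \<in> pbs guessing_game [] \<longleftrightarrow> set_pmf s \<subseteq> {0, 1}"
  unfolding pbs_def hists_at_guessing_game_root by simp

lemma pbs_value_guessing_game_root:
  "pbs_value guessing_game \<pi> [] s = stage_reward guessing_game s (\<pi> s)"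
  unfolding pbs_value_def ptime_guessing_game_root by (simp add: guessing_game_def)

lemma stage_reward_guessing_game_root:
  assumes "set_pmf s \<subseteq> {0, 1}" and "set_pmf (d []) \<subseteq> {0, 1}"
  shows "stage_reward guessing_game s d = pmf s 0 * pmf (d []) 0 + pmf s 1 * pmf (d []) 1"
proof -
  have guess_right: "measure_pmf.expectation (d []) (\<lambda>a. rew guessing_game h a) = pmf (d []) h"
    if "h \<in> {0, 1}" for h
    using that assms(2)
    by (subst integral_measure_pmf_real[where A = "{0, 1}"]) (auto simp: guessing_game_def)
  have "stage_reward guessing_game s d =
      (\<Sum>h\<in>{0, 1}. measure_pmf.expectation (d (aohist guessing_game (actor guessing_game h) h))
         (\<lambda>a. rew guessing_game h a) * pmf s h)"
    unfolding stage_reward_def using assms(1)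
    by (subst integral_measure_pmf_real[where A = "{0, 1}"]) auto
  also have "\<dots> = (\<Sum>h\<in>{0::nat, 1}. pmf (d []) h * pmf s h)"
    using guess_right[of 0] guess_right[of 1] by (simp add: guessing_game_def)
  finally show ?thesis by simp
qed

lemma SPE_guessing_game_root_rule_supported:
  assumes "is_SPE guessing_game \<pi>" and "s \<in> pbs guessing_game []"
  shows "set_pmf (\<pi> s []) \<subseteq> {0, 1}"
proof -
  have "\<forall>x\<in>aohs_at guessing_game (pact guessing_game []) []. set_pmf (\<pi> s x) \<subseteq> acts guessing_game"
    using assms root_in_pubs_guessing_game unfolding is_SPE_def valid_policy_def by blast
  then show ?thesis
    unfolding pact_guessing_game aohs_at_guessing_game_root by (simp add: guessing_game_def)
qed

lemma SPE_guessing_game_root_beats_pure_guess: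
  assumes spe: "is_SPE guessing_game \<pi>" and s: "s \<in> pbs guessing_game []" and a: "a \<in> {0, 1}"
  shows "pmf s a \<le> pmf s 0 * pmf (\<pi> s []) 0 + pmf s 1 * pmf (\<pi> s []) 1"
proof -
  define \<pi>' where "\<pi>' = (\<lambda>t. if t = s then (\<lambda>x. return_pmf a) else \<pi> t)"
  have "valid_policy guessing_game \<pi>'"
    using spe a unfolding is_SPE_def valid_policy_def \<pi>'_def by (auto simp: guessing_game_def)
  then have "deviation guessing_game 0 \<pi> \<pi>'"
    unfolding deviation_def by (simp add: pact_guessing_game)
  then have "pbs_value guessing_game \<pi>' [] s \<le> pbs_value guessing_game \<pi> [] s"
    using spe root_in_pubs_guessing_game s unfolding is_SPE_def by blast
  moreover have "pbs_value guessing_game \<pi>' [] s = pmf s a"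
    using a s unfolding pbs_value_guessing_game_root pbs_guessing_game_root
    by (subst stage_reward_guessing_game_root) (auto simp: \<pi>'_def)
  moreover have "pbs_value guessing_game \<pi> [] s =
      pmf s 0 * pmf (\<pi> s []) 0 + pmf s 1 * pmf (\<pi> s []) 1"
    using s SPE_guessing_game_root_rule_supported[OF spe s]
    unfolding pbs_value_guessing_game_root pbs_guessing_game_root
    by (subst stage_reward_guessing_game_root) auto
  ultimately show ?thesis by simp
qed

definition belief_vec :: "real \<Rightarrow> nat \<Rightarrow> real" where
  "belief_vec t = (\<lambda>h. if h = 0 then t else if h = 1 then 1 - t else 0)"

definition belief :: "real \<Rightarrow> nat pmf" where
  "belief t = embed_pmf (belief_vec t)"

lemma pmf_belief:
  assumes "0 \<le> t" "t \<le> 1"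
  shows "pmf (belief t) = belief_vec t"
proof -
  have "(\<integral>\<^sup>+h. ennreal (belief_vec t h) \<partial>count_space UNIV) = (\<Sum>h\<in>{0, 1}. ennreal (belief_vec t h))"
    by (rule nn_integral_count_space') (auto simp: belief_vec_def)
  also have "\<dots> = 1"
    using assms by (simp add: belief_vec_def flip: ennreal_plus)
  finally show ?thesis
    unfolding belief_def by (intro ext pmf_embed_pmf) (use assms in \<open>auto simp: belief_vec_def\<close>)
qed

lemma belief_in_pbs_guessing_game_root:
  assumes "0 \<le> t" "t \<le> 1"
  shows "belief t \<in> pbs guessing_game []"
  using pmf_belief[OF assms] unfolding pbs_guessing_game_root
  by (auto simp: set_pmf_iff belief_vec_def split: if_splits)

lemma SPE_guessing_game_guess_zero:
  assumes spe: "is_SPE guessing_game \<pi>" and t: "0 \<le> t" "t \<le> 1" "t \<noteq> 1/2"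
  shows "pmf (\<pi> (belief t) []) 0 = (if t > 1/2 then 1 else 0)"
proof -
  define p where "p = pmf (\<pi> (belief t) []) 0"
  have s: "belief t \<in> pbs guessing_game []"
    using belief_in_pbs_guessing_game_root t by simp
  have "pmf (\<pi> (belief t) []) 0 + pmf (\<pi> (belief t) []) 1 = 1"
    using sum_pmf_eq_1[OF _ SPE_guessing_game_root_rule_supported[OF spe s]] by simp
  then have guess_one: "pmf (\<pi> (belief t) []) 1 = 1 - p" unfolding p_def by simp
  have "0 \<le> p" "p \<le> 1" unfolding p_def by (simp_all add: pmf_le_1)
  moreover have "t \<le> t * p + (1 - t) * (1 - p)" "1 - t \<le> t * p + (1 - t) * (1 - p)"
    using SPE_guessing_game_root_beats_pure_guess[OF spe s, of 0]
      SPE_guessing_game_root_beats_pure_guess[OF spe s, of 1]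
    unfolding guess_one pmf_belief[OF t(1,2)] p_def[symmetric] by (simp_all add: belief_vec_def)
  then have "(2 * t - 1) * (1 - p) \<le> 0" "(1 - 2 * t) * p \<le> 0"
    by (simp_all add: algebra_simps)
  ultimately show ?thesis
    using t(3) unfolding p_def[symmetric] by (auto simp: mult_le_0_iff)
qed

lemma continuous_on_belief_vec: "continuous_on {0..1} belief_vec"
proof (rule continuous_on_coordinatewise_then_product)
  fix h
  show "continuous_on {0..1} (\<lambda>t. belief_vec t h)"
    unfolding belief_vec_def by (cases "h = 0"; cases "h = 1") (auto intro!: continuous_intros)
qed

lemma policy_continuous_guessing_game_along_beliefs:
  assumes "policy_continuous guessing_game \<pi>"
  shows "continuous_on {0..1} (\<lambda>t. pmf (\<pi> (belief t) []) 0)"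
proof -
  obtain f where f: "continuous_on (pbs_vec ` pbs guessing_game []) f"
    and f_eq: "\<And>s. s \<in> pbs guessing_game [] \<Longrightarrow> f (pbs_vec s) = rule_vec guessing_game [] (\<pi> s)"
    using assms root_in_pubs_guessing_game unfolding policy_continuous_def by blast
  have vec: "pbs_vec (belief t) = belief_vec t" if "t \<in> {0..1}" for t
    using pmf_belief that unfolding pbs_vec_def by simp
  have "belief_vec ` {0..1} \<subseteq> pbs_vec ` pbs guessing_game []"
    using vec belief_in_pbs_guessing_game_root by (metis atLeastAtMost_iff image_eqI image_subsetI)
  then have "continuous_on {0..1} (\<lambda>t. f (belief_vec t))"
    by (rule continuous_on_compose2[OF f continuous_on_belief_vec])
  then have "continuous_on {0..1} (\<lambda>t. f (belief_vec t) ([], 0))"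
    by (rule continuous_on_product_then_coordinatewise)
  moreover have "f (belief_vec t) ([], 0) = pmf (\<pi> (belief t) []) 0" if "t \<in> {0..1}" for t
    using that f_eq[OF belief_in_pbs_guessing_game_root, of t] vec[OF that]
    unfolding rule_vec_def pact_guessing_game aohs_at_guessing_game_root by simp
  ultimately show ?thesis by (rule continuous_on_cong[THEN iffD1, OF refl, rotated])
qed

theorem propositionB8:
  shows "\<exists>G :: game. wf_game G \<and> \<not> (\<exists>\<pi>. is_SPE G \<pi> \<and> policy_continuous G \<pi>)"
proof (intro exI conjI notI)
  show "wf_game guessing_game" by (rule wf_guessing_game)
  assume "\<exists>\<pi>. is_SPE guessing_game \<pi> \<and> policy_continuous guessing_game \<pi>"
  then obtain \<pi> where spe: "is_SPE guessing_game \<pi>" and cont: "policy_continuous guessing_game \<pi>"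
    by blast
  from cont have "continuous_on {0..1} (\<lambda>t. pmf (\<pi> (belief t) []) 0)"
    by (rule policy_continuous_guessing_game_along_beliefs)
  moreover have "\<not> continuous_on {0..1} (\<lambda>t. pmf (\<pi> (belief t) []) 0)"
    by (rule not_continuous_on_step[of 0 "1/2" 1]) (auto simp: SPE_guessing_game_guess_zero[OF spe])
  ultimately show False by contradiction
qed

end
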